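(* For every prime $k\ge5$ there exists a family $F$ of functions with codomain $\{0,1,\dots,k-1\}$ such that $\mathrm{opt}_{\mathrm{ag}}(F,\eta)\ge(0.5-o(1))\big((k\ln k)\,\mathrm{opt}_{\mathrm{std}}(F)+k\eta\big)$, where the $o(1)$ term tends to $0$ as $k\to\infty$.
   Context: Let $F$ be a family of functions from a set $X$ to a set $Y$. Online learning of $F$ is a game between a learner and an adversary: the adversary secretly fixes some $f\in F$ and presents inputs $x_1,x_2,\dots\in X$ one at a time, chosen adaptively; after each input $x_t$ the learner guesses a value for $f(x_t)$; a mistake is an incorrect guess. In the standard model, after each guess the adversary reveals $f(x_t)$, and $\mathrm{opt}_{\mathrm{std}}(F)$ is the maximum number of mistakes under optimal play by both sides. In the agnostic model with parameter $\eta\ge0$ (an integer), after each guess the adversary only says YES or NO, but may give incorrect feedback in up to $\eta$ rounds; $\mathrm{opt}_{\mathrm{ag}}(F,\eta)$ is the worst-case number of mistakes of the learner (with respect to the chosen $f$) when both learner and adversary play optimally. *)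

theory Defs
  imports "HOL-Analysis.Analysis" "HOL-Computational_Algebra.Primes"
begin

text \<open>The adversary is adaptive: the state is the
version space V of functions in F consistent with all revealed labels.
std_forces X Y V m: the adversary can force at least m (further) mistakes against
every deterministic learner whose guesses range over the codomain Y.
Inductive (least fixed point) = the adversary wins the open game
"at least m mistakes occur at some finite time".\<close>

inductive std_forces :: "'x set \<Rightarrow> 'y set \<Rightarrow> ('x \<Rightarrow> 'y) set \<Rightarrow> nat \<Rightarrow> bool"
  for X :: "'x set" and Y :: "'y set" where
  std_base: "V \<noteq> {} \<Longrightarrow> std_forces X Y V 0"
| std_step: "x \<in> X \<Longrightarrow>
     (\<forall>g\<in>Y. \<exists>y. {f\<in>V. f x = y} \<noteq> {} \<and>
        (if y = g then std_forces X Y {f\<in>V. f x = y} m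
         else std_forces X Y {f\<in>V. f x = y} (m - 1)))
     \<Longrightarrow> std_forces X Y V m"

definition opt_std :: "'x set \<Rightarrow> 'y set \<Rightarrow> ('x \<Rightarrow> 'y) set \<Rightarrow> enat" where
  "opt_std X Y F = Sup {enat m | m. std_forces X Y F m}"

text \<open>Agnostic game with YES/NO feedback and at most eta lies.  The state records,
for every candidate target f, the number of rounds L f in which the feedback was
incorrect with respect to f, and the number of mistakes M f of the learner with
respect to f.  The adversary wins (at least m mistakes) once some f in F has at
most eta lies and at least m mistakes w.r.t. f.  Feedback b = True means YES
("your guess is correct").\<close>

inductive ag_forces :: "'x set \<Rightarrow> 'y set \<Rightarrow> ('x \<Rightarrow> 'y) set \<Rightarrow> nat \<Rightarrow>
    (('x \<Rightarrow> 'y) \<Rightarrow> nat) \<Rightarrow> (('x \<Rightarrow> 'y) \<Rightarrow> nat) \<Rightarrow> nat \<Rightarrow> bool"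
  for X :: "'x set" and Y :: "'y set" and F :: "('x \<Rightarrow> 'y) set" and eta :: nat where
  ag_base: "f \<in> F \<Longrightarrow> L f \<le> eta \<Longrightarrow> m \<le> M f \<Longrightarrow> ag_forces X Y F eta L M m"
| ag_step: "x \<in> X \<Longrightarrow>
     (\<forall>g\<in>Y. \<exists>b::bool.
        ag_forces X Y F eta
          (\<lambda>f. L f + (if (f x = g) = b then 0 else 1))
          (\<lambda>f. M f + (if f x = g then 0 else 1)) m)
     \<Longrightarrow> ag_forces X Y F eta L M m"

definition opt_ag :: "'x set \<Rightarrow> 'y set \<Rightarrow> ('x \<Rightarrow> 'y) set \<Rightarrow> nat \<Rightarrow> enat" where
  "opt_ag X Y F eta = Sup {enat m | m. ag_forces X Y F eta (\<lambda>_. 0) (\<lambda>_. 0) m}"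

end

theory Submission
  imports Defs
begin

text \<open>The family consists of the linear forms x \<mapsto> a \<cdot> x on (Z/k)^n, n = k + 4. In the
  standard game a mistake is only possible when the version space, an affine subspace, splits
  at the query point, and then it shrinks by the factor k; hence opt_std \<le> n.

  In the agnostic game the adversary always answers NO. Querying a point at which k members
  of the family take all k values forces (k - 1)(\<eta> + 1) mistakes while one of these members
  suffers at most \<eta> lies. Alternatively, by a second-moment count, as long as at least k^4
  candidates survive there is a point at which no value is taken by more than a 1/k + 1/k^2
  fraction of them; keeping only the candidates that disagree with the guess costs them a
  mistake and no lie, and starting from k^(k+4) candidates this lasts about k^2 ln k rounds.
  The maximum of the two bounds is at least (1/2 - 4/k)(k ln k \<cdot> opt_std + k \<eta>).\<close>

section \<open>Residue classes modulo a prime\<close>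

lemma eq_if_dvd_diff_residues:
  fixes a b k :: int
  assumes "0 \<le> a" "a < k" "0 \<le> b" "b < k" "k dvd b - a"
  shows "a = b"
  using dvd_imp_le_int[of "b - a" k] assms by (cases "a = b") auto

lemma eq_if_add_mult_mod_eq:
  fixes i j :: nat
  assumes k: "prime k" and c: "c mod int k \<noteq> 0" and "i < k" "j < k"
    and eq: "(y + int i * c) mod int k = (y + int j * c) mod int k"
  shows "i = j"
proof -
  have "int k dvd (int i - int j) * c"
    using eq by (simp add: mod_eq_dvd_iff left_diff_distrib)
  moreover have "\<not> int k dvd c" using c by (simp add: dvd_eq_mod_eq_0)
  ultimately have "int k dvd int i - int j"
    using k by (simp add: prime_dvd_mult_iff prime_nat_int_transfer)
  then show ?thesis
    using eq_if_dvd_diff_residues[of "int j" "int k" "int i"] assms(3,4) by simp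
qed

lemma funpow_shift_mod:
  fixes \<phi> :: "'w \<Rightarrow> int" and m :: int
  assumes W: "\<tau> ` W \<subseteq> W" and shift: "\<And>w. w \<in> W \<Longrightarrow> \<phi> (\<tau> w) mod m = (\<phi> w + c) mod m"
    and w: "w \<in> W"
  shows "(\<tau> ^^ j) w \<in> W \<and> \<phi> ((\<tau> ^^ j) w) mod m = (\<phi> w + int j * c) mod m"
proof (induction j)
  case (Suc j)
  then have "\<phi> ((\<tau> ^^ Suc j) w) mod m = ((\<phi> w + int j * c) mod m + c) mod m"
    using shift[of "(\<tau> ^^ j) w"] by (metis funpow.simps(2) o_apply mod_add_left_eq)
  also have "\<dots> = (\<phi> w + int (Suc j) * c) mod m"
    by (simp add: algebra_simps mod_add_right_eq)
  finally show ?case using Suc W by auto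
qed (use w in simp)

text \<open>The iterates of \<tau> map the residue class of y injectively into the k pairwise
  distinct classes of y + j c, j < k.\<close>

lemma card_residue_class_le:
  fixes \<phi> :: "'w \<Rightarrow> int" and \<tau> :: "'w \<Rightarrow> 'w"
  assumes k: "prime k" and W: "finite W" "\<tau> ` W \<subseteq> W" "inj_on \<tau> W"
    and shift: "\<And>w. w \<in> W \<Longrightarrow> \<phi> (\<tau> w) mod int k = (\<phi> w + c) mod int k"
    and c: "c mod int k \<noteq> 0"
  shows "k * card {w\<in>W. \<phi> w mod int k = y mod int k} \<le> card W"
proof -
  define C where "C j = {w\<in>W. \<phi> w mod int k = (y + int j * c) mod int k}" for j :: nat
  have iter: "(\<tau> ^^ j) w \<in> W \<and> \<phi> ((\<tau> ^^ j) w) mod int k = (\<phi> w + int j * c) mod int k"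
    if "w \<in> W" for j w
    using W(2) shift that by (rule funpow_shift_mod)
  have inj_iter: "inj_on (\<tau> ^^ j) W" for j
  proof (induction j)
    case (Suc j)
    have "inj_on (\<tau> \<circ> (\<tau> ^^ j)) W"
      using Suc iter by (intro comp_inj_on inj_on_subset[OF W(3)]) auto
    then show ?case by (simp add: o_def)
  qed simp
  have class_le: "card (C 0) \<le> card (C j)" for j
  proof -
    have "(\<tau> ^^ j) ` C 0 \<subseteq> C j"
    proof
      fix u assume "u \<in> (\<tau> ^^ j) ` C 0"
      then obtain w where w: "w \<in> W" "\<phi> w mod int k = y mod int k" and u: "u = (\<tau> ^^ j) w"
        by (auto simp: C_def)
      have "\<phi> u mod int k = (\<phi> w mod int k + int j * c) mod int k"
        using iter[OF w(1)] u by (simp add: mod_add_left_eq)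
      then show "u \<in> C j" using iter[OF w(1)] u w(2) by (simp add: C_def mod_add_left_eq)
    qed
    moreover have "card ((\<tau> ^^ j) ` C 0) = card (C 0)"
      by (rule card_image, rule inj_on_subset[OF inj_iter]) (auto simp: C_def)
    moreover have "finite (C j)" using W(1) by (simp add: C_def)
    ultimately show ?thesis by (metis card_mono)
  qed
  have "C i \<inter> C j = {}" if "i < k" "j < k" "i \<noteq> j" for i j
    using eq_if_add_mult_mod_eq[OF k c that(1,2), of y] that(3) by (auto simp: C_def)
  then have "(\<Sum>j<k. card (C j)) = card (\<Union>j<k. C j)"
    using W(1) by (intro card_UN_disjoint[symmetric]) (auto simp: C_def)
  moreover have "k * card (C 0) \<le> (\<Sum>j<k. card (C j))"
    using sum_bounded_below[of "{..<k}" "card (C 0)" "\<lambda>j. card (C j)"] class_le by simp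
  moreover have "card (\<Union>j<k. C j) \<le> card W" by (rule card_mono[OF W(1)]) (auto simp: C_def)
  ultimately show ?thesis by (simp add: C_def)
qed

section \<open>Vectors over Z/k\<close>

text \<open>(Z/k)^n, with residues represented in {0..<k} and vectors extensional outside {..<n}.\<close>

definition zvecs :: "nat \<Rightarrow> nat \<Rightarrow> (nat \<Rightarrow> int) set" where
  "zvecs k n = PiE {..<n} (\<lambda>_. {0..<int k})"

definition zvec_dot :: "nat \<Rightarrow> nat \<Rightarrow> (nat \<Rightarrow> int) \<Rightarrow> (nat \<Rightarrow> int) \<Rightarrow> int" where
  "zvec_dot k n a v = (\<Sum>i<n. a i * v i) mod int k"

definition zvec_add :: "nat \<Rightarrow> nat \<Rightarrow> (nat \<Rightarrow> int) \<Rightarrow> (nat \<Rightarrow> int) \<Rightarrow> nat \<Rightarrow> int" where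
  "zvec_add k n w d = restrict (\<lambda>i. (w i + d i) mod int k) {..<n}"

definition zvec_unit :: "nat \<Rightarrow> nat \<Rightarrow> nat \<Rightarrow> int" where
  "zvec_unit n i = restrict (\<lambda>j. if j = i then 1 else 0) {..<n}"

lemma finite_zvecs: "finite (zvecs k n)"
  unfolding zvecs_def by (intro finite_PiE) auto

lemma card_zvecs: "card (zvecs k n) = k ^ n"
  unfolding zvecs_def by (subst card_PiE) auto

lemma zvecs_eqI:
  assumes "a \<in> zvecs k n" "b \<in> zvecs k n" "\<And>i. i < n \<Longrightarrow> a i = b i"
  shows "a = b"
  using assms unfolding zvecs_def by (rule PiE_ext[where k = "{..<n}"]) auto

lemma zvecs_range: "a \<in> zvecs k n \<Longrightarrow> i < n \<Longrightarrow> 0 \<le> a i \<and> a i < int k"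
  using PiE_mem[of a "{..<n}" "\<lambda>_. {0..<int k}" i] unfolding zvecs_def by simp

lemma zvec_dot_commute: "zvec_dot k n a v = zvec_dot k n v a"
  unfolding zvec_dot_def by (simp add: mult.commute)

lemma zvec_dot_range: "0 < k \<Longrightarrow> 0 \<le> zvec_dot k n a v \<and> zvec_dot k n a v < int k"
  unfolding zvec_dot_def by simp

lemma sum_mod_mult_left:
  fixes m :: int
  shows "(\<Sum>i\<in>I. (x i mod m) * v i) mod m = (\<Sum>i\<in>I. x i * v i) mod m"
proof -
  have "(\<Sum>i\<in>I. (x i mod m) * v i) mod m = (\<Sum>i\<in>I. (x i mod m) * v i mod m) mod m"
    by (rule mod_sum_eq[symmetric])
  also have "\<dots> = (\<Sum>i\<in>I. x i * v i mod m) mod m"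
    by (simp add: mod_mult_left_eq)
  also have "\<dots> = (\<Sum>i\<in>I. x i * v i) mod m"
    by (rule mod_sum_eq)
  finally show ?thesis .
qed

lemma zvec_dot_add_left:
  "zvec_dot k n (zvec_add k n w d) v = (zvec_dot k n w v + zvec_dot k n d v) mod int k"
proof -
  have "zvec_dot k n (zvec_add k n w d) v = (\<Sum>i<n. ((w i + d i) mod int k) * v i) mod int k"
    unfolding zvec_dot_def zvec_add_def by simp
  also have "\<dots> = ((\<Sum>i<n. w i * v i) + (\<Sum>i<n. d i * v i)) mod int k"
    by (simp add: sum_mod_mult_left distrib_right sum.distrib)
  finally show ?thesis
    unfolding zvec_dot_def by (simp add: mod_add_eq)
qed

lemma zvec_dot_add_right:
  "zvec_dot k n v (zvec_add k n w d) = (zvec_dot k n v w + zvec_dot k n v d) mod int k"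
  using zvec_dot_add_left[of k n w d v] by (simp add: zvec_dot_commute)

lemma zvec_dot_diff_left:
  "zvec_dot k n (\<lambda>i. b i - a i) v = (zvec_dot k n b v - zvec_dot k n a v) mod int k"
proof -
  have "(\<Sum>i<n. (b i - a i) * v i) = (\<Sum>i<n. b i * v i) - (\<Sum>i<n. a i * v i)"
    by (simp add: left_diff_distrib sum_subtractf)
  then show ?thesis
    unfolding zvec_dot_def by (simp add: mod_diff_eq)
qed

lemma zvec_dot_unit_right:
  assumes "i < n"
  shows "zvec_dot k n a (zvec_unit n i) = a i mod int k"
proof -
  have "(\<Sum>j<n. a j * zvec_unit n i j) = (\<Sum>j<n. if j = i then a i else 0)"
    by (rule sum.cong) (auto simp: zvec_unit_def)
  then show ?thesis
    using assms by (simp add: zvec_dot_def)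
qed

lemma zvec_add_in_zvecs: "0 < k \<Longrightarrow> zvec_add k n w d \<in> zvecs k n"
  unfolding zvec_add_def zvecs_def by auto

lemma inj_on_zvec_add: "inj_on (\<lambda>w. zvec_add k n w d) (zvecs k n)"
proof (rule inj_onI)
  fix w w' assume w: "w \<in> zvecs k n" "w' \<in> zvecs k n" and eq: "zvec_add k n w d = zvec_add k n w' d"
  show "w = w'"
  proof (rule zvecs_eqI[OF w])
    fix i assume i: "i < n"
    then have "(w' i + d i) mod int k = (w i + d i) mod int k"
      using fun_cong[OF eq, of i] by (simp add: zvec_add_def)
    then have "int k dvd (w' i + d i) - (w i + d i)"
      using mod_eq_dvd_iff by blast
    then show "w i = w' i"
      using eq_if_dvd_diff_residues[of "w i" "int k" "w' i"] zvecs_range[OF w(1) i] zvecs_range[OF w(2) i]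
      by simp
  qed
qed

definition zvec_solutions :: "nat \<Rightarrow> nat \<Rightarrow> ((nat \<Rightarrow> int) \<times> int) set \<Rightarrow> (nat \<Rightarrow> int) set" where
  "zvec_solutions k n C = {a \<in> zvecs k n. \<forall>(v, y) \<in> C. zvec_dot k n a v = y}"

lemma finite_zvec_solutions: "finite (zvec_solutions k n C)"
  by (rule finite_subset[OF _ finite_zvecs]) (auto simp: zvec_solutions_def)

lemma zvec_solutions_insert:
  "zvec_solutions k n (insert (v, y) C) = {a \<in> zvec_solutions k n C. zvec_dot k n a v = y}"
  unfolding zvec_solutions_def by auto

lemma card_zvec_solutions_insert_le:
  assumes k: "prime k" and a: "a \<in> zvec_solutions k n C" and b: "b \<in> zvec_solutions k n C"
    and ab: "zvec_dot k n a v \<noteq> zvec_dot k n b v"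
  shows "k * card (zvec_solutions k n (insert (v, y) C)) \<le> card (zvec_solutions k n C)"
proof -
  have k0: "0 < k" using k prime_gt_0_nat by blast
  define d where "d = (\<lambda>i. b i - a i)"
  let ?S = "zvec_solutions k n C"
  have "k * card {w \<in> ?S. zvec_dot k n w v mod int k = y mod int k} \<le> card ?S"
  proof (rule card_residue_class_le[OF k finite_zvec_solutions])
    show "(\<lambda>w. zvec_add k n w d) ` ?S \<subseteq> ?S"
    proof clarify
      fix w assume w: "w \<in> ?S"
      have "zvec_dot k n (zvec_add k n w d) u = z" if "(u, z) \<in> C" for u z
      proof -
        have "zvec_dot k n w u = z" "zvec_dot k n a u = z" "zvec_dot k n b u = z"
          using that w a b by (auto simp: zvec_solutions_def)
        then show ?thesis
          using zvec_dot_range[OF k0, of n w u]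
          by (simp add: zvec_dot_add_left d_def zvec_dot_diff_left)
      qed
      then show "zvec_add k n w d \<in> ?S"
        using zvec_add_in_zvecs[OF k0] by (auto simp: zvec_solutions_def)
    qed
    show "inj_on (\<lambda>w. zvec_add k n w d) ?S"
      by (rule inj_on_subset[OF inj_on_zvec_add]) (auto simp: zvec_solutions_def)
    show "zvec_dot k n (zvec_add k n w d) v mod int k
        = (zvec_dot k n w v + (zvec_dot k n b v - zvec_dot k n a v)) mod int k" for w
      by (simp add: zvec_dot_add_left d_def zvec_dot_diff_left mod_add_right_eq)
    show "(zvec_dot k n b v - zvec_dot k n a v) mod int k \<noteq> 0"
      using eq_if_dvd_diff_residues ab zvec_dot_range[OF k0] by (metis dvd_eq_mod_eq_0)
  qed
  moreover have "zvec_solutions k n (insert (v, y) C)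
      \<subseteq> {w \<in> ?S. zvec_dot k n w v mod int k = y mod int k}"
    by (auto simp: zvec_solutions_insert)
  then have "card (zvec_solutions k n (insert (v, y) C))
      \<le> card {w \<in> ?S. zvec_dot k n w v mod int k = y mod int k}"
    by (rule card_mono[rotated]) (simp add: finite_zvec_solutions)
  ultimately show ?thesis
    by (meson le_trans mult_le_mono2)
qed

lemma card_zvec_dot_eq_le:
  assumes k: "prime k" and a: "a \<in> zvecs k n" and b: "b \<in> zvecs k n" and "a \<noteq> b"
  shows "k * card {v \<in> zvecs k n. zvec_dot k n a v = zvec_dot k n b v} \<le> k ^ n"
proof -
  have k0: "0 < k" using k prime_gt_0_nat by blast
  obtain i where i: "i < n" "a i \<noteq> b i"
    using zvecs_eqI[OF a b] \<open>a \<noteq> b\<close> by blast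
  have ai: "a i mod int k = a i" and bi: "b i mod int k = b i"
    using zvecs_range[OF a i(1)] zvecs_range[OF b i(1)] by simp_all
  define \<phi> where "\<phi> v = zvec_dot k n a v - zvec_dot k n b v" for v
  have "k * card {v \<in> zvecs k n. \<phi> v mod int k = 0 mod int k} \<le> card (zvecs k n)"
  proof (rule card_residue_class_le[OF k finite_zvecs])
    show "(\<lambda>v. zvec_add k n v (zvec_unit n i)) ` zvecs k n \<subseteq> zvecs k n"
      using zvec_add_in_zvecs[OF k0] by auto
    show "inj_on (\<lambda>v. zvec_add k n v (zvec_unit n i)) (zvecs k n)"
      by (rule inj_on_zvec_add)
    show "\<phi> (zvec_add k n v (zvec_unit n i)) mod int k = (\<phi> v + (a i - b i)) mod int k" for v
    proof -
      have "\<phi> (zvec_add k n v (zvec_unit n i)) mod int k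
          = ((zvec_dot k n a v + a i) mod int k - (zvec_dot k n b v + b i) mod int k) mod int k"
        by (simp add: \<phi>_def zvec_dot_add_right zvec_dot_unit_right[OF i(1)] ai bi)
      also have "\<dots> = (\<phi> v + (a i - b i)) mod int k"
        by (simp add: mod_diff_eq \<phi>_def algebra_simps)
      finally show ?thesis .
    qed
    show "(a i - b i) mod int k \<noteq> 0"
      using eq_if_dvd_diff_residues[of "b i" "int k" "a i"] zvecs_range[OF a i(1)] zvecs_range[OF b i(1)] i(2)
      by (auto simp: dvd_eq_mod_eq_0)
  qed
  moreover have "{v \<in> zvecs k n. zvec_dot k n a v = zvec_dot k n b v}
      \<subseteq> {v \<in> zvecs k n. \<phi> v mod int k = 0 mod int k}"
    by (auto simp: \<phi>_def)
  then have "card {v \<in> zvecs k n. zvec_dot k n a v = zvec_dot k n b v}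
      \<le> card {v \<in> zvecs k n. \<phi> v mod int k = 0 mod int k}"
    by (rule card_mono[rotated]) (simp add: finite_zvecs)
  ultimately show ?thesis
    unfolding card_zvecs by (meson le_trans mult_le_mono2)
qed

section \<open>Strategies in the learning games\<close>

lemma opt_std_le:
  assumes "\<And>m. std_forces X Y F m \<Longrightarrow> m \<le> n"
  shows "opt_std X Y F \<le> enat n"
  unfolding opt_std_def using assms by (auto intro!: Sup_least)

lemma ag_forces_le_opt_ag: "ag_forces X Y F eta (\<lambda>_. 0) (\<lambda>_. 0) m \<Longrightarrow> enat m \<le> opt_ag X Y F eta"
  unfolding opt_ag_def by (rule Sup_upper) blast

text \<open>The learner guesses the value f0 x of some consistent f0, so the adversary can only
  force a mistake by moving to a class that excludes f0.\<close>

lemma std_forces_pow_le_card: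
  assumes "std_forces X Y V m" "V \<in> \<V>" "Y \<noteq> {}"
    and restrict_closed: "\<And>V x y. V \<in> \<V> \<Longrightarrow> x \<in> X \<Longrightarrow> {f \<in> V. f x = y} \<in> \<V>"
    and finite: "\<And>V. V \<in> \<V> \<Longrightarrow> finite V"
    and range: "\<And>V f x. V \<in> \<V> \<Longrightarrow> f \<in> V \<Longrightarrow> x \<in> X \<Longrightarrow> f x \<in> Y"
    and split: "\<And>V f x y. V \<in> \<V> \<Longrightarrow> f \<in> V \<Longrightarrow> x \<in> X \<Longrightarrow> f x \<noteq> y \<Longrightarrow>
      k * card {f \<in> V. f x = y} \<le> card V"
  shows "k ^ m \<le> card V"
  using assms(1,2)
proof (induction rule: std_forces.induct)
  case (std_base V)
  then show ?case using finite by (simp add: Suc_le_eq card_gt_0_iff)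
next
  case (std_step x V m)
  obtain g0 where "g0 \<in> Y" using \<open>Y \<noteq> {}\<close> by blast
  then obtain f0 where f0: "f0 \<in> V" using std_step.IH by blast
  have "f0 x \<in> Y" using range[OF std_step.prems f0 std_step.hyps(1)] .
  then obtain y where
    IH: "if y = f0 x
      then std_forces X Y {f \<in> V. f x = y} m
        \<and> ({f \<in> V. f x = y} \<in> \<V> \<longrightarrow> k ^ m \<le> card {f \<in> V. f x = y})
      else std_forces X Y {f \<in> V. f x = y} (m - 1)
        \<and> ({f \<in> V. f x = y} \<in> \<V> \<longrightarrow> k ^ (m - 1) \<le> card {f \<in> V. f x = y})"
    using std_step.IH by blast
  have restricted: "{f \<in> V. f x = y} \<in> \<V>" using restrict_closed[OF std_step.prems std_step.hyps(1)] .
  have finV: "finite V" using finite[OF std_step.prems] .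
  show ?case
  proof (cases "y = f0 x")
    case True
    then have "k ^ m \<le> card {f \<in> V. f x = y}" using IH restricted by simp
    also have "\<dots> \<le> card V" using finV by (intro card_mono) auto
    finally show ?thesis .
  next
    case False
    then have "k ^ (m - 1) \<le> card {f \<in> V. f x = y}" using IH restricted by simp
    moreover have "k * card {f \<in> V. f x = y} \<le> card V"
      using split[OF std_step.prems f0 std_step.hyps(1)] False by simp
    moreover have "1 \<le> card V" using f0 finV by (auto simp: Suc_le_eq card_gt_0_iff)
    ultimately show ?thesis
      by (cases m) (auto intro: le_trans mult_le_mono2)
  qed
qed

text \<open>Answering NO to a guess g charges every candidate f either a lie (if f x = g)
  or a mistake, so M f + L f grows by one per round, while the remaining lie budget of the
  representatives drops by at most one.\<close>

lemma ag_forces_by_lying: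
  assumes x0: "x0 \<in> X" and Y: "finite Y" and rep: "\<And>c. c \<in> Y \<Longrightarrow> rep c \<in> F \<and> rep c x0 = c"
  shows "\<forall>f. s \<le> M f + L f \<Longrightarrow> r < (\<Sum>c\<in>Y. eta + 1 - L (rep c)) \<Longrightarrow>
    ag_forces X Y F eta L M (s + r - eta)"
proof (induction r arbitrary: L M s)
  case 0
  then obtain c where c: "c \<in> Y" "eta + 1 - L (rep c) \<noteq> 0"
    by (metis (mono_tags, lifting) less_numeral_extra(3) sum.neutral)
  moreover have "s \<le> M (rep c) + L (rep c)" using 0(1) by blast
  ultimately show ?case
    using rep[OF c(1)] by (intro ag_base[of "rep c"]) auto
next
  case (Suc r)
  show ?case
  proof (rule ag_step[OF x0], intro ballI exI[of _ False])
    fix g assume g: "g \<in> Y"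
    define L' where "L' f = L f + (if (f x0 = g) = False then 0 else 1)" for f
    define M' where "M' f = M f + (if f x0 = g then 0 else 1)" for f
    have "(\<Sum>c\<in>Y. eta + 1 - L (rep c)) \<le> (\<Sum>c\<in>Y. (eta + 1 - L' (rep c)) + (if c = g then 1 else 0))"
      using rep by (intro sum_mono) (auto simp: L'_def)
    also have "\<dots> = (\<Sum>c\<in>Y. eta + 1 - L' (rep c)) + 1"
      using Y g by (simp add: sum.distrib)
    finally have "r < (\<Sum>c\<in>Y. eta + 1 - L' (rep c))" using Suc.prems(2) by simp
    moreover have "\<forall>f. s + 1 \<le> M' f + L' f" using Suc.prems(1) by (auto simp: L'_def M'_def)
    ultimately have "ag_forces X Y F eta L' M' (s + 1 + r - eta)" by (rule Suc.IH[rotated])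
    then show "ag_forces X Y F eta (\<lambda>f. L f + (if (f x0 = g) = False then 0 else 1))
        (\<lambda>f. M f + (if f x0 = g then 0 else 1)) (s + Suc r - eta)"
      by (simp add: L'_def[abs_def] M'_def[abs_def])
  qed
qed

lemma opt_ag_ge_by_lying:
  assumes "x0 \<in> X" "finite Y" "\<And>c. c \<in> Y \<Longrightarrow> \<exists>f\<in>F. f x0 = c"
  shows "enat ((card Y - 1) * (eta + 1)) \<le> opt_ag X Y F eta"
proof (cases "Y = {}")
  case True
  then show ?thesis by (simp add: zero_enat_def[symmetric])
next
  case False
  obtain rep where rep: "\<And>c. c \<in> Y \<Longrightarrow> rep c \<in> F \<and> rep c x0 = c"
    using assms(3) by metis
  have "ag_forces X Y F eta (\<lambda>_. 0) (\<lambda>_. 0) (0 + (card Y * (eta + 1) - 1) - eta)"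
    using False assms(2) by (intro ag_forces_by_lying[OF assms(1,2) rep]) (auto simp: card_gt_0_iff)
  moreover have "0 + (card Y * (eta + 1) - 1) - eta = (card Y - 1) * (eta + 1)"
    using False assms(2) by (cases "card Y") auto
  ultimately show ?thesis by (simp add: ag_forces_le_opt_ag)
qed

text \<open>An answer NO is truthful for every candidate that disagrees with the guess; keeping
  only those candidates costs no lies and one mistake per round.\<close>

lemma ag_forces_by_denial:
  fixes q c :: real
  assumes q: "0 \<le> q" "q \<le> 1" and c: "1 \<le> c"
    and shrink: "\<And>S. S \<subseteq> F \<Longrightarrow> c \<le> card S \<Longrightarrow> \<exists>x\<in>X. \<forall>g\<in>Y. q * card S \<le> card {f \<in> S. f x \<noteq> g}"
  shows "S \<subseteq> F \<Longrightarrow> c \<le> card S * q ^ r \<Longrightarrow> \<forall>f\<in>S. L f \<le> eta \<and> t \<le> M f \<Longrightarrow>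
    ag_forces X Y F eta L M (t + r)"
proof (induction r arbitrary: S L M t)
  case 0
  then have "S \<noteq> {}" using c by auto
  then obtain f where "f \<in> S" by blast
  then show ?case using 0 by (intro ag_base[of f]) auto
next
  case (Suc r)
  have "q ^ Suc r \<le> 1" using q by (intro power_le_one) auto
  then have "card S * q ^ Suc r \<le> card S" by (simp add: mult_left_le)
  then obtain x where x: "x \<in> X" "\<forall>g\<in>Y. q * card S \<le> card {f \<in> S. f x \<noteq> g}"
    using shrink Suc.prems(1,2) by (meson order_trans)
  show ?case
  proof (rule ag_step[OF x(1)], intro ballI exI[of _ False])
    fix g assume g: "g \<in> Y"
    have "c \<le> (q * card S) * q ^ r" using Suc.prems(2) by (simp add: algebra_simps)
    also have "\<dots> \<le> card {f \<in> S. f x \<noteq> g} * q ^ r"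
      using x(2) g q by (simp add: mult_right_mono)
    finally have "ag_forces X Y F eta (\<lambda>f. L f + (if (f x = g) = False then 0 else 1))
        (\<lambda>f. M f + (if f x = g then 0 else 1)) (t + 1 + r)"
      using Suc.prems(1,3) by (intro Suc.IH) auto
    then show "ag_forces X Y F eta (\<lambda>f. L f + (if (f x = g) = False then 0 else 1))
        (\<lambda>f. M f + (if f x = g then 0 else 1)) (t + Suc r)"
      by simp
  qed
qed

lemma opt_ag_ge_by_denial:
  fixes q c :: real
  assumes "0 \<le> q" "q \<le> 1" "1 \<le> c"
    and "\<And>S. S \<subseteq> F \<Longrightarrow> c \<le> card S \<Longrightarrow> \<exists>x\<in>X. \<forall>g\<in>Y. q * card S \<le> card {f \<in> S. f x \<noteq> g}"
    and "c \<le> card F * q ^ r"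
  shows "enat r \<le> opt_ag X Y F eta"
  using ag_forces_by_denial[OF assms(1-4), where S = F and L = "\<lambda>_. 0" and M = "\<lambda>_. 0" and t = 0]
    assms(5)
  by (simp add: ag_forces_le_opt_ag)

section \<open>Fibres and second moments\<close>

lemma sum_card_fibres:
  assumes "finite A" "finite G" "\<phi> ` A \<subseteq> G"
  shows "(\<Sum>g\<in>G. card {a \<in> A. \<phi> a = g}) = card A"
proof -
  have "card (\<Union>g\<in>G. {a \<in> A. \<phi> a = g}) = (\<Sum>g\<in>G. card {a \<in> A. \<phi> a = g})"
    using assms(1,2) by (intro card_UN_disjoint) auto
  moreover have "(\<Union>g\<in>G. {a \<in> A. \<phi> a = g}) = A" using assms(3) by auto
  ultimately show ?thesis by simp
qed

lemma sum_card_fibres_squared: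
  assumes "finite A" "finite G" "\<phi> ` A \<subseteq> G"
  shows "(\<Sum>g\<in>G. card {a \<in> A. \<phi> a = g} ^ 2) = card {p \<in> A \<times> A. \<phi> (fst p) = \<phi> (snd p)}"
proof -
  have "{p \<in> A \<times> A. \<phi> (fst p) = \<phi> (snd p)} = (\<Union>g\<in>G. {a \<in> A. \<phi> a = g} \<times> {a \<in> A. \<phi> a = g})"
    using assms(3) by auto
  then show ?thesis
    using assms(1,2) by (simp add: card_UN_disjoint card_cartesian_product power2_eq_square disjoint_iff)
qed

lemma sum_card_Collect_swap:
  assumes "finite A" "finite B"
  shows "(\<Sum>a\<in>A. card {b \<in> B. P a b}) = (\<Sum>b\<in>B. card {a \<in> A. P a b})"
proof -
  have "(\<Sum>a\<in>A. card {b \<in> B. P a b}) = (\<Sum>a\<in>A. \<Sum>b\<in>B. if P a b then 1 else 0)"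
    using assms(2) by (simp add: sum.inter_filter[symmetric])
  also have "\<dots> = (\<Sum>b\<in>B. \<Sum>a\<in>A. if P a b then 1 else 0)"
    by (rule sum.swap)
  also have "\<dots> = (\<Sum>b\<in>B. card {a \<in> A. P a b})"
    using assms(1) by (simp add: sum.inter_filter[symmetric])
  finally show ?thesis .
qed

lemma ex_le_of_sum_le:
  fixes f :: "'a \<Rightarrow> real" and B :: real
  assumes "finite V" "V \<noteq> {}" "(\<Sum>v\<in>V. f v) \<le> card V * B"
  shows "\<exists>v\<in>V. f v \<le> B"
proof (rule ccontr)
  assume "\<not> ?thesis"
  then have "(\<Sum>v\<in>V. B) < (\<Sum>v\<in>V. f v)"
    using assms(1,2) by (intro sum_strict_mono) auto
  then show False using assms(3) by simp
qed

lemma le_mean_add_sqrt_of_sum_squares_le: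
  fixes t :: "'i \<Rightarrow> real"
  assumes "finite I" "j \<in> I" "(\<Sum>i\<in>I. t i) = s" "(\<Sum>i\<in>I. t i ^ 2) \<le> s + s ^ 2 / card I"
  shows "t j \<le> s / card I + sqrt s"
proof -
  define N where "N = real (card I)"
  define m where "m = s / N"
  have N: "0 < N" using assms(1,2) card_gt_0_iff N_def by fastforce
  have "(\<Sum>i\<in>I. (t i - m) ^ 2) = (\<Sum>i\<in>I. t i ^ 2 - 2 * m * t i + m ^ 2)"
    by (intro sum.cong refl) (simp add: power2_eq_square algebra_simps)
  also have "\<dots> = (\<Sum>i\<in>I. t i ^ 2) - 2 * m * (\<Sum>i\<in>I. t i) + N * m ^ 2"
    by (simp add: sum.distrib sum_subtractf sum_distrib_left N_def)
  also have "\<dots> = (\<Sum>i\<in>I. t i ^ 2) - s ^ 2 / N"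
    using N assms(3) by (simp add: m_def power2_eq_square field_simps)
  finally have "(\<Sum>i\<in>I. (t i - m) ^ 2) \<le> s"
    using assms(4) N_def by simp
  moreover have "(t j - m) ^ 2 \<le> (\<Sum>i\<in>I. (t i - m) ^ 2)"
    using assms(1,2) by (intro member_le_sum) auto
  ultimately have "\<bar>t j - m\<bar> \<le> sqrt s"
    using real_sqrt_le_mono[of "(t j - m) ^ 2" s] by simp
  then show ?thesis unfolding m_def N_def by linarith
qed

lemma sum_zvec_collisions_le:
  assumes k: "prime k" and A: "A \<subseteq> zvecs k n"
  shows "(\<Sum>v\<in>zvecs k n. real (card {p \<in> A \<times> A. zvec_dot k n (fst p) v = zvec_dot k n (snd p) v}))
    \<le> real k ^ n * (card A + card A ^ 2 / k)"
proof -
  define K where "K = real k ^ n"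
  have finA: "finite A" using A finite_zvecs finite_subset by blast
  have pair: "real (card {v \<in> zvecs k n. zvec_dot k n (fst p) v = zvec_dot k n (snd p) v})
      \<le> (if fst p = snd p then K else 0) + K / k" if "p \<in> A \<times> A" for p
  proof (cases "fst p = snd p")
    case True
    have "card {v \<in> zvecs k n. zvec_dot k n (fst p) v = zvec_dot k n (snd p) v} \<le> card (zvecs k n)"
      by (rule card_mono[OF finite_zvecs]) auto
    then show ?thesis using True by (simp add: K_def card_zvecs)
  next
    case False
    have "k * card {v \<in> zvecs k n. zvec_dot k n (fst p) v = zvec_dot k n (snd p) v} \<le> k ^ n"
      using card_zvec_dot_eq_le[OF k _ _ False] that A by (auto simp: mem_Times_iff)
    then have "real k * card {v \<in> zvecs k n. zvec_dot k n (fst p) v = zvec_dot k n (snd p) v} \<le> K"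
      unfolding K_def of_nat_mult[symmetric] of_nat_power[symmetric] of_nat_le_iff .
    then show ?thesis
      using False prime_gt_0_nat[OF k] by (simp add: field_simps)
  qed
  have "(\<Sum>v\<in>zvecs k n. real (card {p \<in> A \<times> A. zvec_dot k n (fst p) v = zvec_dot k n (snd p) v}))
      = (\<Sum>p\<in>A \<times> A. real (card {v \<in> zvecs k n. zvec_dot k n (fst p) v = zvec_dot k n (snd p) v}))"
    using sum_card_Collect_swap[OF finite_zvecs finite_cartesian_product[OF finA finA],
        of "\<lambda>v p. zvec_dot k n (fst p) v = zvec_dot k n (snd p) v"]
    by (simp only: of_nat_sum[symmetric])
  also have "\<dots> \<le> (\<Sum>p\<in>A \<times> A. (if fst p = snd p then K else 0) + K / k)"
    by (intro sum_mono pair)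
  also have "\<dots> = (\<Sum>a\<in>A. \<Sum>b\<in>A. (if a = b then K else 0) + K / k)"
    by (simp add: sum.cartesian_product split_def)
  also have "\<dots> = K * (card A + card A ^ 2 / k)"
    using finA by (simp add: sum.distrib power2_eq_square algebra_simps)
  finally show ?thesis unfolding K_def .
qed

text \<open>Averaging the collision count over all v gives a v whose fibres have a small second
  moment, hence no large fibre.\<close>

lemma exists_balanced_zvec:
  assumes k: "prime k" and A: "A \<subseteq> zvecs k n"
  shows "\<exists>v\<in>zvecs k n. \<forall>y. card {a \<in> A. zvec_dot k n a v = y} \<le> card A / k + sqrt (card A)"
proof -
  define G where "G = {0..<int k}"
  define s where "s = real (card A)"
  have k0: "0 < k" using k prime_gt_0_nat by blast
  have finA: "finite A" using A finite_zvecs finite_subset by blast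
  have range: "(\<lambda>a. zvec_dot k n a v) ` A \<subseteq> G" for v
    using zvec_dot_range[OF k0] by (auto simp: G_def)
  have "zvecs k n \<noteq> {}"
    using card_zvecs[of k n] k0 by (intro notI) simp
  moreover have "(\<Sum>v\<in>zvecs k n. real (card {p \<in> A \<times> A. zvec_dot k n (fst p) v = zvec_dot k n (snd p) v}))
      \<le> card (zvecs k n) * (s + s ^ 2 / k)"
    using sum_zvec_collisions_le[OF k A] by (simp add: card_zvecs s_def)
  ultimately obtain v where v: "v \<in> zvecs k n"
      and "real (card {p \<in> A \<times> A. zvec_dot k n (fst p) v = zvec_dot k n (snd p) v}) \<le> s + s ^ 2 / k"
    using ex_le_of_sum_le[OF finite_zvecs] by blast
  then have squares: "(\<Sum>y\<in>G. real (card {a \<in> A. zvec_dot k n a v = y}) ^ 2) \<le> s + s ^ 2 / card G"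
    using sum_card_fibres_squared[OF finA _ range, of v] by (simp add: G_def flip: of_nat_sum of_nat_power)
  have sum: "(\<Sum>y\<in>G. real (card {a \<in> A. zvec_dot k n a v = y})) = s"
    using sum_card_fibres[OF finA _ range, of v] by (simp add: G_def s_def flip: of_nat_sum)
  have "card {a \<in> A. zvec_dot k n a v = y} \<le> s / k + sqrt s" for y
  proof (cases "y \<in> G")
    case True
    then show ?thesis
      using le_mean_add_sqrt_of_sum_squares_le[OF _ True sum squares] by (simp add: G_def)
  next
    case False
    then have empty: "{a \<in> A. zvec_dot k n a v = y} = {}" using range by blast
    have "0 \<le> s / k + sqrt s"
      by (intro add_nonneg_nonneg divide_nonneg_nonneg) (simp_all add: s_def)
    then show ?thesis unfolding empty by simp
  qed
  then show ?thesis using v s_def by blast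
qed

section \<open>The family of linear forms\<close>

text \<open>The family of all linear forms on (Z/k)^n; a point x of the domain stands for the
  vector dec x.\<close>

definition lin_fun :: "nat \<Rightarrow> nat \<Rightarrow> (nat \<Rightarrow> nat \<Rightarrow> int) \<Rightarrow> (nat \<Rightarrow> int) \<Rightarrow> nat \<Rightarrow> nat" where
  "lin_fun k n dec a x = nat (zvec_dot k n a (dec x))"

lemma lin_fun_less: "0 < k \<Longrightarrow> lin_fun k n dec a x < k"
  using zvec_dot_range[of k n a "dec x"] by (simp add: lin_fun_def nat_less_iff)

lemma lin_fun_eq_iff: "0 < k \<Longrightarrow> lin_fun k n dec a x = y \<longleftrightarrow> zvec_dot k n a (dec x) = int y"
  using zvec_dot_range[of k n a "dec x"] by (auto simp: lin_fun_def)

lemma zvec_unit_in_zvecs: "1 < k \<Longrightarrow> zvec_unit n i \<in> zvecs k n"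
  by (auto simp: zvec_unit_def zvecs_def)

lemma inj_on_lin_fun:
  assumes k: "1 < k" and dec: "zvecs k n \<subseteq> dec ` X"
  shows "inj_on (lin_fun k n dec) (zvecs k n)"
proof (rule inj_onI)
  fix a b assume a: "a \<in> zvecs k n" and b: "b \<in> zvecs k n" and eq: "lin_fun k n dec a = lin_fun k n dec b"
  show "a = b"
  proof (rule zvecs_eqI[OF a b])
    fix i assume i: "i < n"
    have "zvec_unit n i \<in> dec ` X"
      using zvec_unit_in_zvecs[OF k] dec by (rule rev_subsetD)
    then obtain x where x: "dec x = zvec_unit n i" by (metis imageE)
    have "lin_fun k n dec c x = nat (c i)" if "c \<in> zvecs k n" for c
      using zvecs_range[OF that i] by (simp add: lin_fun_def x zvec_dot_unit_right[OF i])
    then have "nat (a i) = nat (b i)"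
      using fun_cong[OF eq, of x] a b by simp
    then show "a i = b i"
      using zvecs_range[OF a i] zvecs_range[OF b i] by (metis eq_nat_nat_iff)
  qed
qed

lemma card_lin_fun_image:
  assumes "1 < k" "zvecs k n \<subseteq> dec ` X" "A \<subseteq> zvecs k n"
  shows "card (lin_fun k n dec ` A) = card A"
  using inj_on_lin_fun[OF assms(1,2)] assms(3) by (metis card_image inj_on_subset)

lemma lin_fun_solutions_restrict:
  assumes "0 < k"
  shows "{f \<in> lin_fun k n dec ` zvec_solutions k n C. f x = y}
    = lin_fun k n dec ` zvec_solutions k n (insert (dec x, int y) C)"
proof -
  have "{f \<in> lin_fun k n dec ` zvec_solutions k n C. f x = y}
      = lin_fun k n dec ` {a \<in> zvec_solutions k n C. lin_fun k n dec a x = y}"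
    by blast
  then show ?thesis
    using assms by (simp add: zvec_solutions_insert lin_fun_eq_iff)
qed

lemma card_lin_fun_restrict_le:
  assumes k: "prime k" and dec: "zvecs k n \<subseteq> dec ` X"
    and a: "a \<in> zvec_solutions k n C" and ne: "lin_fun k n dec a x \<noteq> y"
  shows "k * card {f \<in> lin_fun k n dec ` zvec_solutions k n C. f x = y}
    \<le> card (lin_fun k n dec ` zvec_solutions k n C)"
proof -
  have k1: "1 < k" using k prime_gt_1_nat by blast
  then have k0: "0 < k" by simp
  let ?C' = "insert (dec x, int y) C"
  have sub: "zvec_solutions k n D \<subseteq> zvecs k n" for D by (auto simp: zvec_solutions_def)
  have "k * card (zvec_solutions k n ?C') \<le> card (zvec_solutions k n C)"
  proof (cases "zvec_solutions k n ?C' = {}")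
    case False
    then obtain b where b: "b \<in> zvec_solutions k n ?C'" by blast
    then have "zvec_dot k n a (dec x) \<noteq> zvec_dot k n b (dec x)"
      using ne lin_fun_eq_iff[OF k0] by (auto simp: zvec_solutions_insert)
    then show ?thesis
      using card_zvec_solutions_insert_le[OF k a] b by (auto simp: zvec_solutions_insert)
  qed simp
  then show ?thesis
    unfolding lin_fun_solutions_restrict[OF k0] card_lin_fun_image[OF k1 dec sub] .
qed

text \<open>The version spaces reachable in the standard game are images of solution sets of
  linear systems, and each mistake of the learner cuts them by a factor k.\<close>

lemma opt_std_lin_funs_le:
  assumes k: "prime k" and dec: "zvecs k n \<subseteq> dec ` X"
  shows "opt_std X {..<k} (lin_fun k n dec ` zvecs k n) \<le> enat n"
proof (rule opt_std_le)
  have k1: "1 < k" using k prime_gt_1_nat by blast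
  then have k0: "0 < k" by simp
  define \<V> where "\<V> = range (\<lambda>C. lin_fun k n dec ` zvec_solutions k n C)"
  fix m assume std: "std_forces X {..<k} (lin_fun k n dec ` zvecs k n) m"
  have "k ^ m \<le> card (lin_fun k n dec ` zvecs k n)"
  proof (rule std_forces_pow_le_card[OF std])
    show "lin_fun k n dec ` zvecs k n \<in> \<V>"
      unfolding \<V>_def by (rule range_eqI[of _ _ "{}"]) (simp add: zvec_solutions_def)
    show "{f \<in> V. f x = y} \<in> \<V>" if "V \<in> \<V>" for V x y
      using that lin_fun_solutions_restrict[OF k0] by (auto simp: \<V>_def)
    show "finite V" if "V \<in> \<V>" for V
      using that finite_zvec_solutions by (auto simp: \<V>_def)
    show "f x \<in> {..<k}" if "V \<in> \<V>" "f \<in> V" for V f x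
      using that lin_fun_less[OF k0] by (auto simp: \<V>_def)
    show "k * card {f \<in> V. f x = y} \<le> card V" if "V \<in> \<V>" "f \<in> V" "f x \<noteq> y" for V f x y
      using that card_lin_fun_restrict_le[OF k dec] by (auto simp: \<V>_def)
  qed (use k0 in auto)
  then have "k ^ m \<le> k ^ n"
    using card_lin_fun_image[OF k1 dec order_refl] by (simp add: card_zvecs)
  then show "m \<le> n"
    using k1 power_le_imp_le_exp by blast
qed

lemma sqrt_le_divide_square:
  fixes K s :: real
  assumes "0 < K" "K ^ 4 \<le> s"
  shows "sqrt s \<le> s / K ^ 2"
proof -
  have "(K ^ 2) ^ 2 \<le> s" using assms(2) by (simp flip: power_mult)
  moreover have "0 \<le> (K ^ 2) ^ 2" by simp
  ultimately have s: "0 \<le> s" by linarith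
  have "K ^ 2 \<le> sqrt s" using \<open>(K ^ 2) ^ 2 \<le> s\<close> by (rule real_le_rsqrt)
  then have "K ^ 2 * sqrt s \<le> sqrt s * sqrt s" by (rule mult_right_mono) (use s in simp)
  also have "\<dots> = s" using s by simp
  finally show ?thesis using assms(1) by (simp add: field_simps mult.commute)
qed

lemma exists_query_keeping_fraction:
  assumes k: "prime k" and dec: "zvecs k n \<subseteq> dec ` X"
    and S: "S \<subseteq> lin_fun k n dec ` zvecs k n" and big: "real k ^ 4 \<le> card S"
  shows "\<exists>x\<in>X. \<forall>g\<in>{..<k}. (1 - 1 / k - 1 / k ^ 2) * card S \<le> card {f \<in> S. f x \<noteq> g}"
proof -
  have k1: "1 < k" using k prime_gt_1_nat by blast
  then have k0: "0 < k" by simp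
  obtain A where A: "A \<subseteq> zvecs k n" "S = lin_fun k n dec ` A"
    using S by (meson subset_imageE)
  define s where "s = real (card A)"
  have cardS: "card S = card A" using card_lin_fun_image[OF k1 dec A(1)] A(2) by simp
  have finA: "finite A" using A(1) finite_zvecs finite_subset by blast
  obtain v where v: "v \<in> zvecs k n" and balanced: "\<And>y. card {a \<in> A. zvec_dot k n a v = y} \<le> s / k + sqrt s"
    using exists_balanced_zvec[OF k A(1)] unfolding s_def by blast
  obtain x where x: "x \<in> X" "dec x = v" using v dec by (metis imageE subsetD)
  have sqrt_s: "sqrt s \<le> s / k ^ 2"
    using sqrt_le_divide_square[of "real k" s] k0 big cardS s_def by simp
  have "(1 - 1 / k - 1 / k ^ 2) * card S \<le> card {f \<in> S. f x \<noteq> g}" if "g < k" for g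
  proof -
    let ?hit = "{a \<in> A. lin_fun k n dec a x = g}" and ?miss = "{a \<in> A. lin_fun k n dec a x \<noteq> g}"
    have "{f \<in> S. f x \<noteq> g} = lin_fun k n dec ` ?miss"
      unfolding A(2) by blast
    moreover have "?miss \<subseteq> zvecs k n" using A(1) by blast
    ultimately have miss: "card {f \<in> S. f x \<noteq> g} = card ?miss"
      using card_lin_fun_image[OF k1 dec] by simp
    have "card A = card ?miss + card ?hit"
      using finA by (subst card_Un_disjoint[symmetric]) (auto intro: arg_cong[of _ _ card])
    then have "real (card ?miss) \<ge> s - s / k - s / k ^ 2"
      using balanced[of "int g"] sqrt_s lin_fun_eq_iff[OF k0, of n dec _ x g] x(2) unfolding s_def by simp
    then show ?thesis
      unfolding miss cardS s_def by (simp add: algebra_simps)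
  qed
  then show ?thesis using x(1) by auto
qed

lemma opt_ag_lin_funs_ge_by_denial:
  assumes k: "prime k" and dec: "zvecs k n \<subseteq> dec ` X"
    and r: "real k ^ 4 \<le> real k ^ n * (1 - 1 / k - 1 / k ^ 2) ^ r"
  shows "enat r \<le> opt_ag X {..<k} (lin_fun k n dec ` zvecs k n) eta"
proof (rule opt_ag_ge_by_denial)
  have k2: "2 \<le> real k" using k prime_ge_2_nat by auto
  then have "1 / real k \<le> 1 / 2" "1 / real k ^ 2 \<le> 1 / 4"
    using power_mono[OF k2, of 2] by (auto simp: divide_simps)
  then show "0 \<le> 1 - 1 / real k - 1 / real k ^ 2" by linarith
  have "0 \<le> 1 / real k" "0 \<le> 1 / real k ^ 2" by simp_all
  then show "1 - 1 / real k - 1 / real k ^ 2 \<le> 1" by linarith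
  show "1 \<le> real k ^ 4" using k2 by simp
  show "\<exists>x\<in>X. \<forall>g\<in>{..<k}. (1 - 1 / real k - 1 / real k ^ 2) * card S \<le> card {f \<in> S. f x \<noteq> g}"
    if "S \<subseteq> lin_fun k n dec ` zvecs k n" "real k ^ 4 \<le> card S" for S
    using exists_query_keeping_fraction[OF k dec that] .
  show "real k ^ 4 \<le> card (lin_fun k n dec ` zvecs k n) * (1 - 1 / real k - 1 / real k ^ 2) ^ r"
    using r k prime_gt_1_nat card_lin_fun_image[OF _ dec order_refl] by (simp add: card_zvecs)
qed

lemma opt_ag_lin_funs_ge_by_lying:
  assumes k: "prime k" and dec: "zvecs k n \<subseteq> dec ` X" and n: "0 < n"
  shows "enat ((k - 1) * (eta + 1)) \<le> opt_ag X {..<k} (lin_fun k n dec ` zvecs k n) eta"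
proof -
  have k1: "1 < k" using k prime_gt_1_nat by blast
  obtain x0 where x0: "x0 \<in> X" "dec x0 = zvec_unit n 0"
    using dec zvec_unit_in_zvecs[OF k1] by (metis imageE subsetD)
  have "\<exists>f\<in>lin_fun k n dec ` zvecs k n. f x0 = c" if "c \<in> {..<k}" for c
  proof -
    define a where "a = restrict (\<lambda>i. if i = 0 then int c else 0) {..<n}"
    have "a \<in> zvecs k n" using that by (auto simp: a_def zvecs_def)
    moreover have "lin_fun k n dec a x0 = c"
      using that n by (simp add: lin_fun_def x0(2) zvec_dot_unit_right a_def)
    ultimately show ?thesis by blast
  qed
  then show ?thesis
    using opt_ag_ge_by_lying[OF x0(1), of "{..<k}"] by simp
qed

section \<open>Numerical estimates\<close>

lemma one_le_ln: "5 \<le> k \<Longrightarrow> 1 \<le> ln (real k)"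
  using exp_le by (subst ln_ge_iff) auto

lemma shrink_factor_pow_ge:
  assumes "5 \<le> k"
  shows "1 \<le> real k ^ k * (1 - 1 / k - 1 / k ^ 2) ^ nat \<lfloor>real k * (real k - 2) * ln (real k)\<rfloor>"
proof -
  define K where "K = real k"
  define q where "q = 1 - 1 / K - 1 / K ^ 2"
  define R where "R = nat \<lfloor>K * (K - 2) * ln K\<rfloor>"
  have K: "5 \<le> K" "1 \<le> ln K" using assms one_le_ln[OF assms] by (simp_all add: K_def)
  have "5 * K \<le> K * K" using K by (intro mult_right_mono) auto
  then have D: "0 < K ^ 2 - K - 1" unfolding power2_eq_square using K by linarith
  have q: "q = (K ^ 2 - K - 1) / K ^ 2" using K by (simp add: q_def field_simps power2_eq_square)
  then have q0: "0 < q" using D K by simp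
  have "- ln q = ln (1 / q)" using q0 by (simp add: ln_div)
  also have "\<dots> \<le> 1 / q - 1" using q0 by (intro ln_le_minus_one) simp
  also have "\<dots> = (K + 1) / (K ^ 2 - K - 1)" using D K by (simp add: q field_simps)
  finally have ln_q: "- ln q \<le> (K + 1) / (K ^ 2 - K - 1)" .
  have "0 \<le> - ln q" using q0 K by (simp add: q field_simps)
  moreover have "real R \<le> K * (K - 2) * ln K" using K by (simp add: R_def)
  ultimately have "real R * (- ln q) \<le> K * (K - 2) * ln K * ((K + 1) / (K ^ 2 - K - 1))"
    using K ln_q by (intro mult_mono) auto
  also have "\<dots> = K * ln K * ((K - 2) * (K + 1) / (K ^ 2 - K - 1))" by simp
  also have "\<dots> \<le> K * ln K"
    using D K by (intro mult_left_le) (simp_all add: divide_le_eq power2_eq_square algebra_simps)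
  finally have "0 \<le> real k * ln K + real R * ln q" by (simp add: K_def)
  also have "\<dots> = ln (K ^ k * q ^ R)" using K q0 by (simp add: ln_mult ln_realpow)
  finally show ?thesis
    using K q0 by (simp add: K_def q_def R_def ln_ge_zero_iff)
qed

text \<open>The slack 4/k absorbs the bound opt_std \<le> k + 4 and the rounding in the number of
  rounds of the denial strategy.\<close>

lemma scaled_bound_le_max:
  assumes "5 \<le> k" "0 \<le> j" "j \<le> real k + 4"
  shows "(1/2 - 4 / real k) * (real k * ln (real k) * j + real k * real eta)
    \<le> max (real (nat \<lfloor>real k * (real k - 2) * ln (real k)\<rfloor>)) (real ((k - 1) * (eta + 1)))"
proof -
  define K where "K = real k"
  define A where "A = 1/2 - 4 / K"
  define R where "R = nat \<lfloor>K * (K - 2) * ln K\<rfloor>"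
  have K: "5 \<le> K" "1 \<le> ln K" using assms(1) one_le_ln[OF assms(1)] by (simp_all add: K_def)
  have "A * (K * ln K * j) \<le> R / 2"
  proof (cases "A \<le> 0")
    case True
    then have "A * (K * ln K * j) \<le> 0"
      using K assms(2) by (intro mult_nonpos_nonneg) auto
    then show ?thesis by simp
  next
    case False
    have "A * (K * ln K * j) \<le> A * (K * ln K * (K + 4))"
      using False K assms(3) by (intro mult_left_mono) (simp_all add: K_def)
    also have "\<dots> = (K * (K - 2) * ln K - (2 * K + 32) * ln K) / 2"
      using K by (simp add: A_def field_simps)
    also have "\<dots> \<le> (K * (K - 2) * ln K - 1) / 2"
    proof -
      have "1 * 1 \<le> (2 * K + 32) * ln K" using K by (intro mult_mono) auto
      then show ?thesis by simp
    qed
    also have "\<dots> \<le> R / 2"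
      using K by (simp add: R_def) linarith
    finally show ?thesis .
  qed
  moreover have "A * (K * real eta) = (K - 8) * real eta / 2"
    using K by (simp add: A_def field_simps)
  moreover have "\<dots> \<le> (K - 1) * (real eta + 1) / 2"
    using K by (intro divide_right_mono mult_mono) auto
  ultimately have "A * (K * ln K * j + K * real eta) \<le> R / 2 + (K - 1) * (real eta + 1) / 2"
    unfolding distrib_left by linarith
  also have "\<dots> \<le> max (real R) ((K - 1) * (real eta + 1))" by simp
  also have "(K - 1) * (real eta + 1) = real ((k - 1) * (eta + 1))"
    unfolding of_nat_mult using assms(1) by (simp add: K_def of_nat_diff)
  finally show ?thesis by (simp only: A_def K_def R_def)
qed

lemma ereal_le_of_enat_max:
  assumes "enat a \<le> e" "enat b \<le> e" "x \<le> max (real a) (real b)"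
  shows "ereal x \<le> ereal_of_enat e"
proof -
  have "enat (max a b) \<le> e" using assms(1,2) by (simp add: max_def)
  then have "ereal_of_enat (enat (max a b)) \<le> ereal_of_enat e" by (simp only: ereal_of_enat_le_iff)
  then have "ereal (real (max a b)) \<le> ereal_of_enat e" by simp
  moreover have "x \<le> real (max a b)" using assms(3) by (simp add: of_nat_max)
  ultimately show ?thesis by (meson ereal_less_eq(3) order_trans)
qed

text \<open>The 4 extra dimensions supply the k^4 candidates that the denial strategy needs in
  every round.\<close>

lemma linear_family_bounds:
  assumes k: "prime k" "5 \<le> k" and dec: "zvecs k (k + 4) \<subseteq> dec ` X"
  defines "F \<equiv> lin_fun k (k + 4) dec ` zvecs k (k + 4)"
  shows "opt_std X {..<k} F \<le> enat (k + 4)"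
    and "enat (nat \<lfloor>real k * (real k - 2) * ln (real k)\<rfloor>) \<le> opt_ag X {..<k} F eta"
    and "enat ((k - 1) * (eta + 1)) \<le> opt_ag X {..<k} F eta"
proof -
  show "opt_std X {..<k} F \<le> enat (k + 4)"
    unfolding F_def by (rule opt_std_lin_funs_le[OF k(1) dec])
  have "real k ^ 4 * 1 \<le> real k ^ 4 * (real k ^ k * (1 - 1 / k - 1 / k ^ 2) ^ nat \<lfloor>real k * (real k - 2) * ln (real k)\<rfloor>)"
    using shrink_factor_pow_ge[OF k(2)] by (intro mult_left_mono) simp_all
  then show "enat (nat \<lfloor>real k * (real k - 2) * ln (real k)\<rfloor>) \<le> opt_ag X {..<k} F eta"
    unfolding F_def by (intro opt_ag_lin_funs_ge_by_denial[OF k(1) dec]) (simp add: power_add mult_ac)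
  show "enat ((k - 1) * (eta + 1)) \<le> opt_ag X {..<k} F eta"
    unfolding F_def by (rule opt_ag_lin_funs_ge_by_lying[OF k(1) dec]) simp
qed

theorem mainTheorem7:
  shows "\<exists>\<epsilon> :: nat \<Rightarrow> real. \<epsilon> \<longlonglongrightarrow> 0 \<and>
    (\<forall>k::nat. prime k \<and> 5 \<le> k \<longrightarrow>
      (\<exists>(X :: nat set) (F :: (nat \<Rightarrow> nat) set).
         (\<forall>f\<in>F. \<forall>x\<in>X. f x < k) \<and>
         opt_std X {..<k} F \<noteq> \<infinity> \<and>
         (\<forall>eta::nat.
            ereal ((1/2 - \<epsilon> k) *
               ((real k * ln (real k)) * real (the_enat (opt_std X {..<k} F)) + real k * real eta))
            \<le> ereal_of_enat (opt_ag X {..<k} F eta))))"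
proof (rule exI[of _ "\<lambda>k. 4 / real k"], intro conjI allI impI, goal_cases)
  case 1
  show ?case
    using tendsto_mult_left_zero[OF lim_inverse_n', of 4] by simp
next
  case (2 k)
  then have k: "prime k" "5 \<le> k" by simp_all
  define X where "X = {0..<card (zvecs k (k + 4))}"
  obtain dec :: "nat \<Rightarrow> nat \<Rightarrow> int" where "bij_betw dec X (zvecs k (k + 4))"
    unfolding X_def using ex_bij_betw_nat_finite[OF finite_zvecs] by blast
  then have dec: "zvecs k (k + 4) \<subseteq> dec ` X" by (simp add: bij_betw_def)
  define F where "F = lin_fun k (k + 4) dec ` zvecs k (k + 4)"
  note bounds = linear_family_bounds[OF k dec, folded F_def]
  obtain j where j: "opt_std X {..<k} F = enat j" "j \<le> k + 4"
    using bounds(1) by (metis enat_ile enat_ord_simps(1))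
  have "\<forall>f\<in>F. \<forall>x\<in>X. f x < k"
    using k lin_fun_less prime_gt_0_nat by (auto simp: F_def)
  moreover have "ereal ((1/2 - 4 / real k) *
      ((real k * ln (real k)) * real (the_enat (opt_std X {..<k} F)) + real k * real eta))
    \<le> ereal_of_enat (opt_ag X {..<k} F eta)" for eta
    using ereal_le_of_enat_max[OF bounds(2,3) scaled_bound_le_max] j k by simp
  ultimately show ?case using j(1) by blast
qed

end
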